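(* Let $N\ge1$, $n\ge1$ and $n_0=n_1=\cdots=n_N=n$. Then for every integer $0\le k\le n$, $$d(k)=\frac{(n-k)(n+1-k)}{2}+\frac{a(k)}{2}\big((a(k)-1)N+2b(k)\big),$$ where $a(k)=\lfloor (n-k)/N\rfloor$ and $b(k)=(n-k)\bmod N$. In particular, $d(k)=\frac{(n-k)(n+1-k)}{2}$ whenever $N\ge n$.
   Context: For a vector $\mathbf n=(n_0,\dots,n_N)$ of positive integers, with nondecreasing rearrangement $\tilde n_0\le\cdots\le\tilde n_N$, $c_i=1-i+\min_{k'=1,\dots,N}\lfloor(\sum_{l=0}^{k'}\tilde n_l-i)/k'\rfloor$ for $i=1,\dots,\tilde n_0$, and $d(k)=\sum_{i=k+1}^{\tilde n_0}c_i$; this is the diversity-multiplexing tradeoff at integer multiplexing gain $k$ of the $(n_0,\dots,n_N)$ Rayleigh product channel (channel matrix a product of $N$ independent i.i.d. $\mathcal{CN}(0,1)$ matrices of sizes $n_{i-1}\times n_i$). *)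

theory Defs
  imports Complex_Main
begin

text \<open>A channel-size vector (n_0,...,n_N) is a list of length N+1 of positive naturals;
  N = length ns - 1. The nondecreasing rearrangement is sort ns, so tilde-n_l = sort ns ! l.\<close>

definition dmt_N :: "nat list \<Rightarrow> nat" where
  "dmt_N ns = length ns - 1"

definition dmt_c :: "nat list \<Rightarrow> nat \<Rightarrow> int" where
  "dmt_c ns i = 1 - int i +
     Min ((\<lambda>k'. (int (\<Sum>l\<le>k'. sort ns ! l) - int i) div int k') ` {1..dmt_N ns})"

definition dmt_d :: "nat list \<Rightarrow> nat \<Rightarrow> int" where
  "dmt_d ns k = (\<Sum>i\<in>{k+1..sort ns ! 0}. dmt_c ns i)"

end

theory Submission
  imports Defs
begin

(* For the equal-size channel n_0 = ... = n_N = n the sorted vector is constant, so the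
   prefix sums in the definition of c_i are (k'+1) n and the floor quotient for index k' is
   n + floor((n-i)/k').  This is minimal at k' = N, giving c_i = (n+1-i) + floor((n-i)/N).
   Reindexing i = n - m turns d(k) into a sum over m < n - k of (m+1) + floor(m/N).
   The two parts are summed in closed form: the triangular numbers give (n-k)(n+1-k)/2, and
   a general identity for partial sums of floor(m/N) gives the second term a(k)((a(k)-1)N+2b(k))/2.
   When N >= n we have n - k <= N, so the floor-sum term vanishes. *)

lemma prefix_sum_sort_replicate:
  assumes "k' < m"
  shows "(\<Sum>l\<le>k'. sort (replicate m (n::nat)) ! l) = (k' + 1) * n"
proof -
  have "(\<Sum>l\<le>k'. sort (replicate m n) ! l) = (\<Sum>l\<le>k'. n)"
    using assms by (intro sum.cong) (auto simp del: replicate.simps)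
  then show ?thesis by simp
qed

text \<open>In the equal-size case the minimum over k' in c_i is attained at k' = N:
  each candidate equals n + floor((n-i)/k'), which decreases in k'.\<close>

lemma dmt_c_replicate:
  assumes "N \<ge> 1" and "i \<le> n"
  shows "dmt_c (replicate (N+1) n) i = int (n + 1 - i) + int ((n - i) div N)"
proof -
  define q where "q k' = (int (\<Sum>l\<le>k'. sort (replicate (N+1) n) ! l) - int i) div int k'"
    for k'
  have q_eq: "q k' = int n + int ((n - i) div k')" if "k' \<in> {1..N}" for k'
  proof -
    have "(\<Sum>l\<le>k'. sort (replicate (N+1) n) ! l) = (k' + 1) * n"
      using that by (intro prefix_sum_sort_replicate) simp
    then have "int (\<Sum>l\<le>k'. sort (replicate (N+1) n) ! l) - int i = int n * int k' + int (n - i)"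
      using assms by (simp add: algebra_simps)
    then show ?thesis
      using that by (simp add: q_def zdiv_int)
  qed
  have "Min (q ` {1..N}) = int n + int ((n - i) div N)"
  proof (rule Min_eqI)
    fix y assume "y \<in> q ` {1..N}"
    then obtain k' where k': "k' \<in> {1..N}" and y: "y = q k'" by blast
    have "(n - i) div N \<le> (n - i) div k'"
      using k' by (simp add: div_le_mono2)
    then show "int n + int ((n - i) div N) \<le> y"
      using q_eq[OF k'] y by simp
  next
    show "int n + int ((n - i) div N) \<in> q ` {1..N}"
      using q_eq[of N] assms by (auto intro!: image_eqI[where x = N])
  qed simp
  then show ?thesis
    using assms by (simp add: dmt_c_def dmt_N_def q_def)
qed

lemma dmt_d_replicate:
  assumes "N \<ge> 1" and "k \<le> n"
  shows "dmt_d (replicate (N+1) n) k = (\<Sum>m<n - k. int (m + 1) + int (m div N))"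
proof -
  have "replicate (N+1) n ! 0 = n"
    by simp
  then have "dmt_d (replicate (N+1) n) k = (\<Sum>i\<in>{k+1..n}. dmt_c (replicate (N+1) n) i)"
    unfolding dmt_d_def sort_replicate by (rule arg_cong)
  also have "\<dots> = (\<Sum>i\<in>{k+1..n}. int (n + 1 - i) + int ((n - i) div N))"
    using dmt_c_replicate[OF assms(1)] by (intro sum.cong) auto
  also have "\<dots> = (\<Sum>m<n - k. int (m + 1) + int (m div N))"
    by (rule sum.reindex_bij_witness[where i = "\<lambda>m. n - m" and j = "\<lambda>i. n - i"])
       (use assms in auto)
  finally show ?thesis .
qed

lemma double_sum_succ:
  "2 * (\<Sum>m<M. int (m + 1)) = int M * (int M + 1)"
  by (induction M) (auto simp: algebra_simps)

text \<open>Closed form for partial sums of floor(m/N): writing M = aN + b with 0 \<le> b < N,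
  each full block of N consecutive values contributes N times its quotient and the
  incomplete block contributes a b.\<close>

lemma double_sum_div:
  assumes "N \<ge> 1"
  shows "2 * (\<Sum>m<M. int (m div N))
           = int (M div N) * ((int (M div N) - 1) * int N + 2 * int (M mod N))"
proof (induction M)
  case 0
  then show ?case by simp
next
  case (Suc M)
  have "2 * (\<Sum>m<Suc M. int (m div N))
          = int (M div N) * ((int (M div N) - 1) * int N + 2 * int (M mod N)) + 2 * int (M div N)"
    using Suc by simp
  also have "\<dots> = int (Suc M div N) * ((int (Suc M div N) - 1) * int N + 2 * int (Suc M mod N))"
  proof (cases "Suc (M mod N) = N")
    case True
    then have "int (M mod N) = int N - 1" "int (Suc M div N) = int (M div N) + 1"
              "int (Suc M mod N) = 0"
      by (simp_all add: div_Suc mod_Suc)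
    then show ?thesis by (simp only:) (simp add: algebra_simps)
  next
    case False
    then show ?thesis by (simp add: div_Suc mod_Suc algebra_simps)
  qed
  finally show ?case .
qed

text \<open>The floor-sum term vanishes as long as M does not exceed N: either the quotient is 0,
  or M = N and the bracket is (1 - 1) N + 0.\<close>

lemma div_term_vanishes:
  assumes "M \<le> N"
  shows "real (M div N) * ((real (M div N) - 1) * real N + 2 * real (M mod N)) = 0"
proof (cases "M = N")
  case True
  then show ?thesis by (cases "N = 0") simp_all
next
  case False
  then show ?thesis using assms by simp
qed

theorem corollary4:
  fixes N n k :: nat
  assumes "N \<ge> 1" and "n \<ge> 1" and "k \<le> n"
  shows "real_of_int (dmt_d (replicate (N+1) n) k) =
           real ((n - k) * (n + 1 - k)) / 2
           + real ((n - k) div N) / 2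
             * ((real ((n - k) div N) - 1) * real N + 2 * real ((n - k) mod N))
       \<and> (N \<ge> n \<longrightarrow> real_of_int (dmt_d (replicate (N+1) n) k) = real ((n - k) * (n + 1 - k)) / 2)"
proof -
  define M where "M = n - k"
  have succ: "n + 1 - k = M + 1"
    using assms by (simp add: M_def)
  have "dmt_d (replicate (N+1) n) k = (\<Sum>m<M. int (m + 1)) + (\<Sum>m<M. int (m div N))"
    using dmt_d_replicate[OF assms(1,3)] by (simp add: M_def sum.distrib)
  then have "2 * dmt_d (replicate (N+1) n) k
          = int (M * (M + 1)) + int (M div N) * ((int (M div N) - 1) * int N + 2 * int (M mod N))"
    using double_sum_succ[of M] double_sum_div[OF assms(1), of M] by (simp add: algebra_simps)
  then have "real_of_int (2 * dmt_d (replicate (N+1) n) k)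
      = real_of_int (int (M * (M + 1))
                     + int (M div N) * ((int (M div N) - 1) * int N + 2 * int (M mod N)))"
    by (rule arg_cong)
  then have closed_form: "real_of_int (dmt_d (replicate (N+1) n) k) =
           real (M * (M + 1)) / 2
           + real (M div N) / 2 * ((real (M div N) - 1) * real N + 2 * real (M mod N))"
    by (simp add: field_simps)
  have vanishes: "real (M div N) / 2 * ((real (M div N) - 1) * real N + 2 * real (M mod N)) = 0"
    if "N \<ge> n"
    using that div_term_vanishes[of M N] by (simp add: M_def)
  show ?thesis
    unfolding succ M_def[symmetric]
    using closed_form vanishes by (intro conjI impI) (simp_all only: add_0_right)
qed

end
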